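(* Let $\mathds J=[0,\infty)$ and consider $\dot x(t)=A(t)x(t)$, $y(t)=C(t)x(t)$ with $x(t)\in\mathbb R^n$, $y(t)\in\mathbb R^p$, where $A(t)$, $C(t)$ are continuous and uniformly bounded on $\mathds J$. Suppose $\dot x(t)=A(t)x(t)$ admits an exponential dichotomy on $\mathds J$ with projection $P=0$. Then the pair $(A(t),C(t))$ is uniformly exponentially detectable if and only if it is uniformly completely observable.
   Context: $\Phi(t,t_0)=X(t)X^{-1}(t_0)$ denotes the state transition matrix of $\dot x=A(t)x$, where $X$ is a nonsingular fundamental matrix solution of $\dot X=AX$. Uniform exponential stability: there exist $\mu>0$, $K\ge1$ with $\|\Phi(t,t_0)\|\le Ke^{-\mu(t-t_0)}$ for all $t_0\in\mathds J$, $t\ge t_0$. Exponential dichotomy on $\mathds J$ with projection $P$ ($P^2=P$): there exist $K\ge1$, $\alpha>0$ and a fundamental matrix solution $X(t)$ with $\|X(t)PX^{-1}(t_0)\|\le Ke^{-\alpha(t-t_0)}$ for $t\ge t_0\ge0$ and $\|X(t)(I_n-P)X^{-1}(t_0)\|\le Ke^{\alpha(t-t_0)}$ for $0\le t\le t_0$. Uniform complete observability: with $M(t_1,t_0)=\int_{t_0}^{t_1}\Phi^\top(s,t_0)C^\top(s)C(s)\Phi(s,t_0)\,ds$, there exist $\beta_1,\beta_2,\sigma>0$ with $\beta_1 I_n\preceq M(t_0+\sigma,t_0)\preceq\beta_2 I_n$ for all $t_0\in\mathds J$. Uniform exponential detectability: there exists a uniformly bounded gain $L(t)$ such that $\dot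 e=[A(t)-L(t)C(t)]e$ is uniformly exponentially stable. *)

theory Defs
  imports "HOL-Analysis.Analysis"
begin

text \<open>Time interval J = [0, infinity) is {0..}. Matrices are Cartesian
  matrices real^'n^'m; the state dimension is the finite type 'n.\<close>

definition uniformly_bounded :: "(real \<Rightarrow> real^'a^'b) \<Rightarrow> bool" where
  "uniformly_bounded F \<longleftrightarrow> bounded (F ` {0..})"

definition fundamental_matrix :: "(real \<Rightarrow> real^'n^'n) \<Rightarrow> (real \<Rightarrow> real^'n^'n) \<Rightarrow> bool" where
  "fundamental_matrix A X \<longleftrightarrow>
     (\<forall>t\<ge>0. (X has_vector_derivative (A t ** X t)) (at t within {0..}) \<and> invertible (X t))"

definition trans_mat :: "(real \<Rightarrow> real^'n^'n) \<Rightarrow> real \<Rightarrow> real \<Rightarrow> real^'n^'n" where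
  "trans_mat X t t0 = X t ** matrix_inv (X t0)"

definition unif_exp_stable :: "(real \<Rightarrow> real^'n^'n) \<Rightarrow> bool" where
  "unif_exp_stable A \<longleftrightarrow>
     (\<exists>X. fundamental_matrix A X \<and>
       (\<exists>\<mu>>0. \<exists>K\<ge>1. \<forall>t0\<ge>0. \<forall>t\<ge>t0. norm (trans_mat X t t0) \<le> K * exp (- \<mu> * (t - t0))))"

definition exp_dichotomy :: "(real \<Rightarrow> real^'n^'n) \<Rightarrow> real^'n^'n \<Rightarrow> bool" where
  "exp_dichotomy A P \<longleftrightarrow> P ** P = P \<and>
     (\<exists>K\<ge>1. \<exists>\<alpha>>0. \<exists>X. fundamental_matrix A X \<and>
        (\<forall>t0\<ge>0. \<forall>t\<ge>t0. norm (X t ** P ** matrix_inv (X t0)) \<le> K * exp (- \<alpha> * (t - t0))) \<and>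
        (\<forall>t0 t. 0 \<le> t \<longrightarrow> t \<le> t0 \<longrightarrow>
            norm (X t ** (mat 1 - P) ** matrix_inv (X t0)) \<le> K * exp (\<alpha> * (t - t0))))"

definition obs_gramian :: "(real \<Rightarrow> real^'n^'n) \<Rightarrow> (real \<Rightarrow> real^'n^'p) \<Rightarrow> real \<Rightarrow> real \<Rightarrow> real^'n^'n" where
  "obs_gramian X C t1 t0 = integral {t0..t1}
     (\<lambda>s. transpose (trans_mat X s t0) ** transpose (C s) ** C s ** trans_mat X s t0)"

text \<open>Loewner order b I <= M and M <= b I, written via quadratic forms.\<close>
definition unif_complete_obs :: "(real \<Rightarrow> real^'n^'n) \<Rightarrow> (real \<Rightarrow> real^'n^'p) \<Rightarrow> bool" where
  "unif_complete_obs A C \<longleftrightarrow>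
     (\<exists>X. fundamental_matrix A X \<and>
       (\<exists>\<beta>1>0. \<exists>\<beta>2>0. \<exists>\<sigma>>0. \<forall>t0\<ge>0. \<forall>v::real^'n.
          \<beta>1 * (v \<bullet> v) \<le> v \<bullet> (obs_gramian X C (t0 + \<sigma>) t0 *v v) \<and>
          v \<bullet> (obs_gramian X C (t0 + \<sigma>) t0 *v v) \<le> \<beta>2 * (v \<bullet> v)))"

text \<open>Gains are taken continuous (so that the error system has classical solutions).\<close>
definition unif_exp_detectable :: "(real \<Rightarrow> real^'n^'n) \<Rightarrow> (real \<Rightarrow> real^'n^'p) \<Rightarrow> bool" where
  "unif_exp_detectable A C \<longleftrightarrow>
     (\<exists>L :: real \<Rightarrow> real^'p^'n. continuous_on {0..} L \<and> uniformly_bounded L \<and>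
        unif_exp_stable (\<lambda>t. A t - L t ** C t))"

end

(*
  With projection P = 0 the dichotomy says that every solution of x' = A x grows exponentially:
  |Phi(t0, t)| <= K exp (-alpha (t - t0)) for t0 <= t.

  By variation of constants a solution x is also a trajectory of the
  stable observer error system x' = (A - L C) x + L y driven by its own output y = C x. Over a
  window of length sigma the solution grows by a large factor while the stable part cannot, so the
  output must carry energy proportional to |x(t0)|^2; Cauchy-Schwarz turns this into the lower
  Gramian bound. The upper bound only needs A and C bounded.

  Take the weighted Gramian
    W(t) = X(0)^T X(0) + integral_0^t exp(2s) X(s)^T C(s)^T C(s) X(s) ds
  and the gain L(t) = exp(2t) X(t) W(t)^-1 X(t)^T C(t)^T. Then X W^-1 is a fundamental matrix of
  A - L C, and V(t, e) = exp(-2t) (X(t)^-1 e)^T W(t) (X(t)^-1 e) is a Lyapunov function: along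
  error trajectories it decays like exp(-2(t - t0)) because W is increasing, and it is comparable
  to |e|^2 by the boundedness of Phi(t0, t) (upper bound) and uniform observability (lower bound).
*)

theory Submission
  imports Defs
begin

section \<open>Matrix norms and inverses\<close>

lemma bounded_bilinear_matrix_matrix_mult:
  "bounded_bilinear ((**) :: real^'n^'m \<Rightarrow> real^'k^'n \<Rightarrow> real^'k^'m)"
  unfolding bilinear_conv_bounded_bilinear[symmetric] bilinear_def
  by (auto simp: linear_iff matrix_matrix_mult_def vec_eq_iff sum.distrib sum_distrib_left algebra_simps)

lemma bounded_bilinear_matrix_vector_mult:
  "bounded_bilinear ((*v) :: real^'n^'m \<Rightarrow> real^'n \<Rightarrow> real^'m)"
  unfolding bilinear_conv_bounded_bilinear[symmetric] bilinear_def
  by (auto simp: linear_iff matrix_vector_mult_def vec_eq_iff sum.distrib sum_distrib_left algebra_simps)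

lemma bounded_linear_transpose: "bounded_linear (transpose :: real^'n^'m \<Rightarrow> real^'m^'n)"
  unfolding linear_conv_bounded_linear[symmetric]
  by (auto simp: linear_iff transpose_def vec_eq_iff)

lemmas matrix_mult_diff_left = bounded_bilinear.diff_left[OF bounded_bilinear_matrix_matrix_mult]
lemmas matrix_mult_diff_right = bounded_bilinear.diff_right[OF bounded_bilinear_matrix_matrix_mult]
lemmas matrix_mult_minus_left = bounded_bilinear.minus_left[OF bounded_bilinear_matrix_matrix_mult]
lemmas matrix_mult_minus_right = bounded_bilinear.minus_right[OF bounded_bilinear_matrix_matrix_mult]
lemmas matrix_mult_scaleR_left = bounded_bilinear.scaleR_left[OF bounded_bilinear_matrix_matrix_mult]
lemmas matrix_mult_scaleR_right = bounded_bilinear.scaleR_right[OF bounded_bilinear_matrix_matrix_mult]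
lemmas matrix_vector_mult_minus_left = bounded_bilinear.minus_left[OF bounded_bilinear_matrix_vector_mult]
lemmas matrix_vector_mult_scaleR_left = bounded_bilinear.scaleR_left[OF bounded_bilinear_matrix_vector_mult]

lemma inner_transpose_matrix_vector: "(v::real^'n) \<bullet> (transpose P *v w) = (P *v v) \<bullet> w"
  by (metis dot_lmul_matrix inner_commute transpose_matrix_vector)

lemma norm_matrix_vector_mult_le: "norm ((A::real^'n^'m) *v x) \<le> norm A * norm x"
proof -
  have "norm (A *v x) = L2_set (\<lambda>i. \<bar>A$i \<bullet> x\<bar>) UNIV"
    by (simp add: norm_vec_def matrix_vector_mul_component)
  also have "\<dots> \<le> L2_set (\<lambda>i. norm (A$i) * norm x) UNIV"
    by (rule L2_set_mono) (auto simp: Cauchy_Schwarz_ineq2)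
  also have "\<dots> = norm A * norm x"
    by (simp add: norm_vec_def L2_set_left_distrib)
  finally show ?thesis .
qed

lemma norm_transpose: "norm (transpose (A::real^'n^'m)) = norm A"
proof -
  have "transpose A \<bullet> transpose A = A \<bullet> A"
    unfolding inner_vec_def transpose_def
    using sum.swap[of "\<lambda>i j. A $ i $ j * A $ i $ j" UNIV UNIV] by simp
  then show ?thesis by (simp add: norm_eq_sqrt_inner)
qed

lemma norm_matrix_mult_le: "norm ((A::real^'n^'m) ** (B::real^'k^'n)) \<le> norm A * norm B"
proof -
  have row: "(A ** B)$i = transpose B *v A$i" for i
    by (simp add: matrix_matrix_mult_def matrix_vector_mult_def transpose_def vec_eq_iff mult.commute)
  have "norm (A ** B) = L2_set (\<lambda>i. norm ((A ** B)$i)) UNIV"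
    by (simp add: norm_vec_def)
  also have "\<dots> \<le> L2_set (\<lambda>i. norm (A$i) * norm B) UNIV"
  proof (rule L2_set_mono)
    fix i
    show "norm ((A ** B)$i) \<le> norm (A$i) * norm B"
      using norm_matrix_vector_mult_le[of "transpose B" "A$i"]
      by (simp only: row norm_transpose mult.commute)
  qed simp
  also have "\<dots> = norm A * norm B"
    by (simp add: norm_vec_def L2_set_left_distrib)
  finally show ?thesis .
qed

lemma norm_matrix_le_card_mult:
  assumes "\<And>x. norm ((A::real^'n^'m) *v x) \<le> c * norm x"
  shows "norm A \<le> real CARD('n) * c"
proof -
  have column: "transpose A $ j = A *v axis j 1" for j
    by (simp add: matrix_vector_mult_basis column_def transpose_def vec_eq_iff)
  have "norm A = L2_set (\<lambda>j. norm (transpose A $ j)) UNIV"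
    by (subst norm_transpose[symmetric]) (simp only: norm_vec_def)
  also have "\<dots> \<le> (\<Sum>j\<in>UNIV. norm (A *v axis j 1))"
    by (simp add: L2_set_le_sum column)
  also have "\<dots> \<le> (\<Sum>j\<in>(UNIV::'n set). c)"
    by (rule sum_mono) (use assms[of "axis _ 1"] in \<open>simp add: norm_axis_1\<close>)
  finally show ?thesis by simp
qed

lemma matrix_inv_right: "invertible (A::real^'n^'n) \<Longrightarrow> A ** matrix_inv A = mat 1"
  and matrix_inv_left: "invertible (A::real^'n^'n) \<Longrightarrow> matrix_inv A ** A = mat 1"
  using someI_ex[of "\<lambda>A'. A ** A' = mat 1 \<and> A' ** A = mat 1"]
  unfolding invertible_def matrix_inv_def by auto

lemma matrix_inv_unique:
  assumes "invertible (A::real^'n^'n)" "A ** B = mat 1"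
  shows "matrix_inv A = B"
  by (metis assms matrix_inv_left matrix_mul_assoc matrix_mul_lid matrix_mul_rid)

lemma invertible_matrix_inv: "invertible (A::real^'n^'n) \<Longrightarrow> invertible (matrix_inv A)"
  using matrix_inv_left matrix_inv_right invertible_def by blast

lemma matrix_inv_matrix_inv: "invertible (A::real^'n^'n) \<Longrightarrow> matrix_inv (matrix_inv A) = A"
  by (meson invertible_matrix_inv matrix_inv_left matrix_inv_unique)

lemma matrix_inv_mult:
  assumes "invertible (A::real^'n^'n)" "invertible (B::real^'n^'n)"
  shows "matrix_inv (A ** B) = matrix_inv B ** matrix_inv A"
proof (rule matrix_inv_unique)
  show "invertible (A ** B)" using assms by (rule invertible_mult)
  have "A ** B ** (matrix_inv B ** matrix_inv A) = A ** (B ** matrix_inv B) ** matrix_inv A"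
    by (simp add: matrix_mul_assoc)
  then show "A ** B ** (matrix_inv B ** matrix_inv A) = mat 1"
    using assms by (simp add: matrix_inv_right)
qed

lemma matrix_inv_cancel_vector:
  assumes "invertible (A::real^'n^'n)"
  shows "A *v (matrix_inv A *v v) = v" "matrix_inv A *v (A *v v) = v"
  using assms by (simp_all add: matrix_vector_mul_assoc matrix_inv_left matrix_inv_right)

lemma invertible_if_kernel_trivial:
  assumes "\<And>v. (A::real^'n^'n) *v v = 0 \<Longrightarrow> v = 0"
  shows "invertible A"
proof -
  have "inj ((*v) A)"
    by (rule injI) (metis assms eq_iff_diff_eq_0 matrix_vector_mult_diff_distrib)
  then show ?thesis
    using matrix_left_invertible_injective invertible_left_inverse by blast
qed

lemma matrix_inv_diff:
  assumes "invertible (P::real^'n^'n)" "invertible Q"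
  shows "matrix_inv Q - matrix_inv P = - (matrix_inv Q ** (Q - P) ** matrix_inv P)"
proof -
  have "matrix_inv Q ** (Q - P) ** matrix_inv P
      = (matrix_inv Q ** Q) ** matrix_inv P - matrix_inv Q ** (P ** matrix_inv P)"
    by (simp add: matrix_mult_diff_left matrix_mult_diff_right matrix_mul_assoc)
  then show ?thesis
    using assms by (simp add: matrix_inv_left matrix_inv_right)
qed

lemma norm_le_matrix_inv_perturbation:
  assumes "invertible (P::real^'n^'n)" "norm (matrix_inv P) * norm (Q - P) \<le> 1/2"
  shows "norm w \<le> 2 * norm (matrix_inv P) * norm (Q *v w)"
proof -
  let ?P' = "matrix_inv P"
  have "w = ?P' *v (Q *v w) - ?P' *v ((Q - P) *v w)"
    using assms(1)
    by (simp add: matrix_vector_mult_diff_rdistrib matrix_vector_mult_diff_distrib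
        matrix_inv_cancel_vector)
  then have "norm w \<le> norm (?P' *v (Q *v w)) + norm (?P' *v ((Q - P) *v w))"
    by (metis norm_triangle_ineq4)
  also have "norm (?P' *v (Q *v w)) \<le> norm ?P' * norm (Q *v w)"
    by (rule norm_matrix_vector_mult_le)
  also have "norm (?P' *v ((Q - P) *v w)) \<le> norm ?P' * (norm (Q - P) * norm w)"
    by (rule order_trans[OF norm_matrix_vector_mult_le mult_left_mono[OF norm_matrix_vector_mult_le norm_ge_zero]])
  also have "norm (matrix_inv P) * (norm (Q - P) * norm w) \<le> 1/2 * norm w"
    unfolding mult.assoc[symmetric] by (rule mult_right_mono[OF assms(2) norm_ge_zero])
  finally show ?thesis by simp
qed

lemma invertible_perturbation:
  assumes "invertible (P::real^'n^'n)" "norm (matrix_inv P) * norm (Q - P) \<le> 1/2"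
  shows "invertible Q"
    and "norm (matrix_inv Q) \<le> real CARD('n) * (2 * norm (matrix_inv P))"
proof -
  show "invertible Q"
  proof (rule invertible_if_kernel_trivial)
    fix v assume "Q *v v = 0"
    then show "v = 0" using norm_le_matrix_inv_perturbation[OF assms, of v] by simp
  qed
  then show "norm (matrix_inv Q) \<le> real CARD('n) * (2 * norm (matrix_inv P))"
    using norm_le_matrix_inv_perturbation[OF assms, of "matrix_inv Q *v _"]
    by (intro norm_matrix_le_card_mult) (simp add: matrix_inv_cancel_vector)
qed

lemma eventually_invertible_near:
  assumes "invertible (P::real^'n^'n)"
  shows "\<forall>\<^sub>F Q in at P. invertible Q \<and> norm (matrix_inv Q) \<le> real CARD('n) * (2 * norm (matrix_inv P))"
proof -
  define n where "n = norm (matrix_inv P) + 1"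
  define d where "d = 1 / (2 * n)"
  have "n > 0" by (simp add: n_def add_nonneg_pos)
  have "norm (matrix_inv P) * norm (Q - P) \<le> 1/2" if "dist Q P < d" for Q
  proof -
    have "norm (matrix_inv P) * norm (Q - P) \<le> n * d"
      using that \<open>n > 0\<close> by (intro mult_mono) (simp_all add: dist_norm n_def)
    also have "\<dots> = 1/2"
      using \<open>n > 0\<close> by (simp add: d_def)
    finally show ?thesis .
  qed
  moreover have "d > 0" using \<open>n > 0\<close> by (simp add: d_def)
  ultimately show ?thesis
    unfolding eventually_at using invertible_perturbation[OF assms] by (intro exI[of _ d]) simp
qed

lemma isCont_matrix_inv:
  assumes "invertible (P::real^'n^'n)"
  shows "isCont matrix_inv P"
proof -
  define B where "B = real CARD('n) * (2 * norm (matrix_inv P))"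
  have "\<forall>\<^sub>F Q in at P. norm (matrix_inv Q - matrix_inv P) \<le> B * norm (Q - P) * norm (matrix_inv P)"
    using eventually_invertible_near[OF assms]
  proof eventually_elim
    case (elim Q)
    then have "norm (matrix_inv Q - matrix_inv P) = norm (matrix_inv Q ** (Q - P) ** matrix_inv P)"
      using matrix_inv_diff[OF assms] by simp
    also have "\<dots> \<le> norm (matrix_inv Q) * norm (Q - P) * norm (matrix_inv P)"
      by (meson norm_matrix_mult_le mult_right_mono norm_ge_zero order_trans)
    also have "\<dots> \<le> B * norm (Q - P) * norm (matrix_inv P)"
      using elim by (intro mult_right_mono) (auto simp: B_def)
    finally show ?case .
  qed
  moreover have "((\<lambda>Q. B * norm (Q - P) * norm (matrix_inv P)) \<longlongrightarrow> B * norm (P - P) * norm (matrix_inv P)) (at P)"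
    by (intro tendsto_intros)
  then have "((\<lambda>Q. B * norm (Q - P) * norm (matrix_inv P)) \<longlongrightarrow> 0) (at P)"
    by simp
  ultimately have "((\<lambda>Q. matrix_inv Q - matrix_inv P) \<longlongrightarrow> 0) (at P)"
    by (rule Lim_null_comparison)
  then show ?thesis
    unfolding isCont_def by (rule LIM_zero_cancel)
qed

lemma has_derivative_matrix_inv:
  assumes "invertible (P::real^'n^'n)"
  shows "(matrix_inv has_derivative (\<lambda>H. - (matrix_inv P ** H ** matrix_inv P))) (at P)"
  unfolding has_derivative_iff_norm
proof
  show "bounded_linear (\<lambda>H. - (matrix_inv P ** H ** matrix_inv P))"
    by (intro bounded_linear_minus bounded_linear_compose[OF
          bounded_bilinear.bounded_linear_left[OF bounded_bilinear_matrix_matrix_mult]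
          bounded_bilinear.bounded_linear_right[OF bounded_bilinear_matrix_matrix_mult]])
  let ?P' = "matrix_inv P"
  have "\<forall>\<^sub>F Q in at P. norm (norm (matrix_inv Q - ?P' - - (?P' ** (Q - P) ** ?P')) / norm (Q - P))
      \<le> norm (?P' - matrix_inv Q) * norm ?P'"
    using eventually_invertible_near[OF assms]
  proof eventually_elim
    case (elim Q)
    then have "matrix_inv Q - ?P' - - (?P' ** (Q - P) ** ?P') = (?P' - matrix_inv Q) ** (Q - P) ** ?P'"
      using matrix_inv_diff[OF assms] by (simp add: matrix_mult_diff_left)
    also have "norm \<dots> \<le> norm (?P' - matrix_inv Q) * norm (Q - P) * norm ?P'"
      by (meson norm_matrix_mult_le mult_right_mono norm_ge_zero order_trans)
    finally have "norm (matrix_inv Q - ?P' - - (?P' ** (Q - P) ** ?P'))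
        \<le> norm (?P' - matrix_inv Q) * norm ?P' * norm (Q - P)"
      by (simp add: mult_ac)
    then show ?case
      by (cases "norm (Q - P) = 0") (simp_all add: divide_le_eq)
  qed
  moreover have "((\<lambda>Q. norm (?P' - matrix_inv Q) * norm ?P') \<longlongrightarrow> norm (?P' - ?P') * norm ?P') (at P)"
    by (intro tendsto_intros isCont_matrix_inv[OF assms, unfolded isCont_def])
  then have "((\<lambda>Q. norm (?P' - matrix_inv Q) * norm ?P') \<longlongrightarrow> 0) (at P)"
    by simp
  ultimately show "((\<lambda>Q. norm (matrix_inv Q - ?P' - - (?P' ** (Q - P) ** ?P')) / norm (Q - P)) \<longlongrightarrow> 0) (at P)"
    by (rule Lim_null_comparison)
qed

lemma has_vector_derivative_matrix_inv:
  fixes F :: "real \<Rightarrow> real^'n^'n"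
  assumes "(F has_vector_derivative F') (at t within S)" "invertible (F t)"
  shows "((\<lambda>s. matrix_inv (F s)) has_vector_derivative
      - (matrix_inv (F t) ** F' ** matrix_inv (F t))) (at t within S)"
proof -
  have "((\<lambda>s. matrix_inv (F s)) has_derivative
      (\<lambda>h. - (matrix_inv (F t) ** (h *\<^sub>R F') ** matrix_inv (F t)))) (at t within S)"
    by (rule has_derivative_compose[where f = F and x = t and g = matrix_inv,
          OF assms(1)[unfolded has_vector_derivative_def] has_derivative_matrix_inv[OF assms(2)]])
  then show ?thesis
    unfolding has_vector_derivative_def by (simp add: matrix_mult_scaleR_left matrix_mult_scaleR_right)
qed

section \<open>Transition matrices\<close>

lemma uniformly_bounded_iff: "uniformly_bounded F \<longleftrightarrow> (\<exists>k. \<forall>t\<ge>0. norm (F t) \<le> k)"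
  unfolding uniformly_bounded_def bounded_iff by auto

lemma exp_dichotomy_zero_backward_decay:
  assumes "exp_dichotomy A (mat 0)"
  obtains X K \<alpha> where "fundamental_matrix A X" "K \<ge> 1" "\<alpha> > 0"
    "\<And>t t0. 0 \<le> t \<Longrightarrow> t \<le> t0 \<Longrightarrow> norm (trans_mat X t t0) \<le> K * exp (\<alpha> * (t - t0))"
    "\<And>t t0. 0 \<le> t \<Longrightarrow> t \<le> t0 \<Longrightarrow> norm (trans_mat X t t0) \<le> K"
proof -
  obtain X K \<alpha> where X: "fundamental_matrix A X" and "K \<ge> 1" "\<alpha> > 0"
    and decay: "\<And>t t0. 0 \<le> t \<Longrightarrow> t \<le> t0 \<Longrightarrow> norm (trans_mat X t t0) \<le> K * exp (\<alpha> * (t - t0))"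
    using assms unfolding exp_dichotomy_def trans_mat_def by auto
  have "norm (trans_mat X t t0) \<le> K" if "0 \<le> t" "t \<le> t0" for t t0
  proof -
    have "K * exp (\<alpha> * (t - t0)) \<le> K"
      using that \<open>\<alpha> > 0\<close> \<open>K \<ge> 1\<close> by (intro mult_left_le) (auto simp: mult_nonneg_nonpos)
    with decay[OF that] show ?thesis
      by linarith
  qed
  with X \<open>K \<ge> 1\<close> \<open>\<alpha> > 0\<close> decay show ?thesis
    by (rule that)
qed

lemma fundamental_matrix_invertible: "fundamental_matrix A X \<Longrightarrow> t \<ge> 0 \<Longrightarrow> invertible (X t)"
  and fundamental_matrix_has_vector_derivative:
    "fundamental_matrix A X \<Longrightarrow> t \<ge> 0 \<Longrightarrow> (X has_vector_derivative (A t ** X t)) (at t within {0..})"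
  unfolding fundamental_matrix_def by auto

lemma continuous_on_fundamental_matrix: "fundamental_matrix A X \<Longrightarrow> continuous_on {0..} X"
  unfolding continuous_on_eq_continuous_within
  by (auto intro: has_vector_derivative_continuous fundamental_matrix_has_vector_derivative)

lemma fundamental_matrix_inv_has_vector_derivative:
  assumes "fundamental_matrix A X" "t \<ge> 0"
  shows "((\<lambda>s. matrix_inv (X s)) has_vector_derivative - (matrix_inv (X t) ** A t)) (at t within {0..})"
  using has_vector_derivative_matrix_inv[OF fundamental_matrix_has_vector_derivative[OF assms]
      fundamental_matrix_invertible[OF assms]]
    matrix_inv_right[OF fundamental_matrix_invertible[OF assms]]
  by (simp add: matrix_mul_assoc[symmetric])

lemma trans_mat_self: "fundamental_matrix A X \<Longrightarrow> s \<ge> 0 \<Longrightarrow> trans_mat X s s = mat 1"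
  unfolding trans_mat_def by (blast intro: matrix_inv_right fundamental_matrix_invertible)

lemma trans_mat_trans:
  assumes "fundamental_matrix A X" "s \<ge> 0"
  shows "trans_mat X t s ** trans_mat X s r = trans_mat X t r"
proof -
  have "trans_mat X t s ** trans_mat X s r = X t ** (matrix_inv (X s) ** X s) ** matrix_inv (X r)"
    unfolding trans_mat_def by (simp add: matrix_mul_assoc)
  then show ?thesis
    using matrix_inv_left[OF fundamental_matrix_invertible[OF assms]] by (simp add: trans_mat_def)
qed

lemma trans_mat_cancel_vector:
  assumes "fundamental_matrix A X" "s \<ge> 0" "t \<ge> 0"
  shows "trans_mat X t s *v (trans_mat X s t *v v) = v"
  using trans_mat_trans[OF assms(1,2), of t t] trans_mat_self[OF assms(1,3)]
  by (simp add: matrix_vector_mul_assoc)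

lemma continuous_on_trans_mat:
  "fundamental_matrix A X \<Longrightarrow> continuous_on {0..} (\<lambda>s. trans_mat X s t0)"
  unfolding trans_mat_def
  by (intro bounded_bilinear.continuous_on[OF bounded_bilinear_matrix_matrix_mult]
      continuous_on_fundamental_matrix continuous_on_const)

lemma trans_mat_has_vector_derivative:
  assumes "fundamental_matrix A X" "t \<ge> 0"
  shows "((\<lambda>s. trans_mat X s t0 *v v) has_vector_derivative A t *v (trans_mat X t t0 *v v))
      (at t within {0..})"
  using bounded_bilinear.has_vector_derivative[OF bounded_bilinear_matrix_vector_mult
      fundamental_matrix_has_vector_derivative[OF assms] has_vector_derivative_const[of "matrix_inv (X t0) *v v"]]
  by (simp add: trans_mat_def matrix_vector_mul_assoc matrix_mul_assoc)

lemma trans_mat_unique: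
  assumes X: "fundamental_matrix A X" and Z: "fundamental_matrix A Z" and "t \<ge> 0" "s \<ge> 0"
  shows "trans_mat Z t s = trans_mat X t s"
proof -
  define W where "W r = matrix_inv (X r) ** Z r" for r
  have "(W has_vector_derivative 0) (at r within {0..})" if "r \<in> {0..}" for r
    unfolding W_def using bounded_bilinear.has_vector_derivative[OF bounded_bilinear_matrix_matrix_mult
        fundamental_matrix_inv_has_vector_derivative[OF X] fundamental_matrix_has_vector_derivative[OF Z]] that
    by (simp add: matrix_mult_minus_left matrix_mul_assoc)
  then obtain W0 where W0: "\<And>r. r \<ge> 0 \<Longrightarrow> W r = W0"
    using has_vector_derivative_zero_constant[of "{0::real..}" W] by (auto simp: convex_real_interval)
  have Z_eq: "Z r = X r ** W0" if "r \<ge> 0" for r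
    using W0[OF that] matrix_inv_right[OF fundamental_matrix_invertible[OF X that]]
    by (auto simp: W_def matrix_mul_assoc)
  have "invertible W0"
    using W0[of 0] invertible_mult[OF invertible_matrix_inv fundamental_matrix_invertible[OF Z]]
      fundamental_matrix_invertible[OF X] by (force simp: W_def)
  then show ?thesis
    using assms(3,4) fundamental_matrix_invertible[OF X]
    by (simp add: trans_mat_def Z_eq matrix_inv_mult matrix_mul_assoc)
      (simp add: matrix_inv_right flip: matrix_mul_assoc)
qed

lemma norm_linear_ode_le_exp:
  fixes x :: "real \<Rightarrow> real^'n" and M :: "real \<Rightarrow> real^'n^'n"
  assumes "t0 \<le> t"
    and deriv: "\<And>s. s \<in> {t0..t} \<Longrightarrow> (x has_vector_derivative M s *v x s) (at s within {t0..t})"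
    and bound: "\<And>s. s \<in> {t0..t} \<Longrightarrow> norm (M s) \<le> k"
  shows "norm (x t) \<le> exp (k * (t - t0)) * norm (x t0)"
proof -
  define E where "E s = exp (- (2 * k) * (s - t0))" for s
  define f where "f s = E s * (x s \<bullet> x s)" for s
  define f' where "f' s = E s * (2 * (x s \<bullet> (M s *v x s)) - 2 * k * (x s \<bullet> x s))" for s
  \<comment> \<open>the squared norm damped by the rate 2k cannot increase\<close>
  have "(f has_derivative (*) (f' s)) (at s within {t0..t})" if "s \<in> {t0..t}" for s
  proof -
    have "((\<lambda>s. x s \<bullet> x s) has_real_derivative 2 * (x s \<bullet> (M s *v x s))) (at s within {t0..t})"
      using bounded_bilinear.has_vector_derivative[OF bounded_bilinear_inner deriv[OF that] deriv[OF that]]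
      by (simp add: has_real_derivative_iff_has_vector_derivative inner_commute)
    moreover have "(E has_real_derivative E s * (- (2 * k))) (at s within {t0..t})"
      unfolding E_def by (auto intro!: derivative_eq_intros)
    ultimately have "(f has_real_derivative f' s) (at s within {t0..t})"
      unfolding f_def f'_def by (auto intro!: derivative_eq_intros simp: algebra_simps)
    then show ?thesis
      by (simp add: has_field_derivative_def)
  qed
  then obtain \<xi> where "\<xi> \<in> {t0..t}" and mvt: "f t - f t0 = f' \<xi> * (t - t0)"
    using mvt_very_simple[OF \<open>t0 \<le> t\<close>, of f "\<lambda>s. (*) (f' s)"] by auto
  have "x \<xi> \<bullet> (M \<xi> *v x \<xi>) \<le> norm (x \<xi>) * (norm (M \<xi>) * norm (x \<xi>))"
    by (meson Cauchy_Schwarz_ineq2 abs_le_iff mult_left_mono norm_ge_zero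
        norm_matrix_vector_mult_le order_trans)
  also have "\<dots> = norm (M \<xi>) * (norm (x \<xi>))\<^sup>2"
    by (simp add: power2_eq_square mult_ac)
  also have "\<dots> \<le> k * (x \<xi> \<bullet> x \<xi>)"
    using bound[OF \<open>\<xi> \<in> {t0..t}\<close>] by (simp add: mult_right_mono flip: power2_norm_eq_inner)
  finally have "f' \<xi> \<le> 0"
    by (simp add: f'_def E_def mult_nonneg_nonpos)
  then have "E t * (norm (x t))\<^sup>2 \<le> (norm (x t0))\<^sup>2"
    using mvt \<open>t0 \<le> t\<close> mult_nonpos_nonneg[of "f' \<xi>" "t - t0"]
    by (simp add: f_def E_def power2_norm_eq_inner)
  then have "(norm (x t))\<^sup>2 \<le> (exp (k * (t - t0)) * norm (x t0))\<^sup>2"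
    by (simp add: E_def exp_minus exp_diff field_simps power_mult_distrib flip: exp_double)
  then show ?thesis
    by (rule power2_le_imp_le) simp
qed

lemma norm_trans_mat_vector_le_exp:
  assumes X: "fundamental_matrix A X" and k: "\<And>t. t \<ge> 0 \<Longrightarrow> norm (A t) \<le> k"
    and "0 \<le> t0" "t0 \<le> t"
  shows "norm (trans_mat X t t0 *v v) \<le> exp (k * (t - t0)) * norm v"
  using norm_linear_ode_le_exp[of t0 t "\<lambda>s. trans_mat X s t0 *v v" A k] assms
    trans_mat_self[OF X \<open>0 \<le> t0\<close>]
  by (force intro: has_vector_derivative_within_subset[OF trans_mat_has_vector_derivative[OF X]])

lemma norm_le_exp_norm_trans_mat:
  assumes X: "fundamental_matrix A X" and k: "\<And>t. t \<ge> 0 \<Longrightarrow> norm (A t) \<le> k"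
    and "0 \<le> s" "s \<le> t"
  shows "norm v \<le> exp (k * (t - s)) * norm (trans_mat X s t *v v)"
  using norm_trans_mat_vector_le_exp[OF X k \<open>0 \<le> s\<close> \<open>s \<le> t\<close>, of "trans_mat X s t *v v"]
    trans_mat_cancel_vector[OF X] assms(3,4)
  by simp

lemma variation_of_constants:
  assumes X: "fundamental_matrix A X" and Y: "fundamental_matrix (\<lambda>t. A t - B t) Y"
    and "0 \<le> t0" "t0 \<le> t"
  shows "((\<lambda>s. trans_mat Y t s *v (B s *v (trans_mat X s t0 *v v))) has_integral
      trans_mat X t t0 *v v - trans_mat Y t t0 *v v) {t0..t}"
proof -
  define x where "x s = trans_mat X s t0 *v v" for s
  define g where "g s = Y t *v (matrix_inv (Y s) *v x s)" for s
  have "(g has_vector_derivative trans_mat Y t s *v (B s *v x s)) (at s within {t0..t})"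
    if "s \<in> {t0..t}" for s
  proof -
    have "s \<ge> 0" using that \<open>0 \<le> t0\<close> by auto
    have "(g has_vector_derivative
        Y t *v (matrix_inv (Y s) *v (A s *v x s) - (matrix_inv (Y s) ** (A s - B s)) *v x s))
        (at s within {0..})"
      unfolding g_def x_def
      using bounded_bilinear.has_vector_derivative[OF bounded_bilinear_matrix_vector_mult
          fundamental_matrix_inv_has_vector_derivative[OF Y \<open>s \<ge> 0\<close>]
          trans_mat_has_vector_derivative[OF X \<open>s \<ge> 0\<close>]]
      by (auto intro!: derivative_eq_intros
          bounded_linear.has_vector_derivative[OF matrix_vector_mul_bounded_linear]
          simp: matrix_vector_mult_minus_left)
    moreover have "Y t *v (matrix_inv (Y s) *v (A s *v x s) - (matrix_inv (Y s) ** (A s - B s)) *v x s)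
        = trans_mat Y t s *v (B s *v x s)"
      by (simp add: matrix_mult_diff_right matrix_vector_mult_diff_rdistrib matrix_vector_mul_assoc
          matrix_vector_mult_diff_distrib trans_mat_def matrix_mul_assoc)
    ultimately have "(g has_vector_derivative trans_mat Y t s *v (B s *v x s)) (at s within {0..})"
      by simp
    then show ?thesis
      by (rule has_vector_derivative_within_subset) (use \<open>0 \<le> t0\<close> in auto)
  qed
  then have "((\<lambda>s. trans_mat Y t s *v (B s *v x s)) has_integral g t - g t0) {t0..t}"
    by (rule fundamental_theorem_of_calculus[OF \<open>t0 \<le> t\<close>])
  moreover have "g t = x t"
    using fundamental_matrix_invertible[OF Y] assms(3,4) by (simp add: g_def matrix_inv_cancel_vector)
  moreover have "x t0 = v"
    by (simp add: x_def trans_mat_self[OF X \<open>0 \<le> t0\<close>])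
  then have "g t0 = trans_mat Y t t0 *v v"
    by (simp add: g_def trans_mat_def matrix_vector_mul_assoc)
  ultimately show ?thesis
    by (simp add: x_def)
qed

lemma integrable_continuous_atLeast:
  fixes f :: "real \<Rightarrow> 'a::banach"
  shows "continuous_on {a..} f \<Longrightarrow> a \<le> b \<Longrightarrow> f integrable_on {b..c}"
  by (rule integrable_continuous_interval, erule continuous_on_subset) auto

lemma integral_has_vector_derivative_atLeast:
  fixes f :: "real \<Rightarrow> 'a::banach"
  assumes "continuous_on {a..} f" "a \<le> t"
  shows "((\<lambda>u. integral {a..u} f) has_vector_derivative f t) (at t within {a..})"
proof -
  have "continuous_on {a..t+1} f"
    by (rule continuous_on_subset[OF assms(1)]) auto
  then have "((\<lambda>u. integral {a..u} f) has_vector_derivative f t) (at t within {a..t+1})"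
    by (rule integral_has_vector_derivative) (use assms in auto)
  moreover have "at t within {a..t+1} = at t within {a..}"
    by (rule at_within_nhd[of _ "{..<t+1}"]) auto
  ultimately show ?thesis by simp
qed

lemma integral_quadratic_form:
  fixes M :: "real \<Rightarrow> real^'n^'n"
  assumes "M integrable_on S"
  shows "u \<bullet> (integral S M *v w) = integral S (\<lambda>s. u \<bullet> (M s *v w))"
proof -
  have "bounded_linear (\<lambda>N::real^'n^'n. u \<bullet> (N *v w))"
    by (intro bounded_linear_compose[OF bounded_linear_inner_right]
        bounded_bilinear.bounded_linear_left[OF bounded_bilinear_matrix_vector_mult])
  from integral_linear[OF assms this] show ?thesis
    by (simp add: o_def)
qed

lemma continuous_on_output:
  assumes "fundamental_matrix A X" "continuous_on {0..} C"
  shows "continuous_on {0..} (\<lambda>s. C s *v (trans_mat X s t0 *v v))"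
  by (intro bounded_bilinear.continuous_on[OF bounded_bilinear_matrix_vector_mult] assms continuous_on_const
      continuous_on_trans_mat[OF assms(1)])

lemma obs_gramian_quadratic_form:
  assumes X: "fundamental_matrix A X" and C: "continuous_on {0..} C" and "0 \<le> t0"
  shows "v \<bullet> (obs_gramian X C t1 t0 *v v) = integral {t0..t1} (\<lambda>s. (norm (C s *v (trans_mat X s t0 *v v)))\<^sup>2)"
proof -
  have "continuous_on {0..} (\<lambda>s. transpose (trans_mat X s t0) ** transpose (C s) ** C s ** trans_mat X s t0)"
    by (intro bounded_bilinear.continuous_on[OF bounded_bilinear_matrix_matrix_mult]
        bounded_linear.continuous_on[OF bounded_linear_transpose] continuous_on_trans_mat[OF X] C)
  then show ?thesis
    unfolding obs_gramian_def
    by (simp add: integral_quadratic_form integrable_continuous_atLeast[OF _ \<open>0 \<le> t0\<close>]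
        inner_transpose_matrix_vector power2_norm_eq_inner flip: matrix_vector_mul_assoc
        del: transpose_matrix_vector)
qed

section \<open>Detectability implies uniform complete observability\<close>

lemma integral_square_le:
  fixes f :: "real \<Rightarrow> real"
  assumes f: "f integrable_on {a..b}" and f2: "(\<lambda>s. (f s)\<^sup>2) integrable_on {a..b}" and "a < b"
  shows "(integral {a..b} f)\<^sup>2 \<le> (b - a) * integral {a..b} (\<lambda>s. (f s)\<^sup>2)"
proof -
  define I where "I = integral {a..b} f"
  define Q where "Q = integral {a..b} (\<lambda>s. (f s)\<^sup>2)"
  define c where "c = I / (b - a)"
  have expand: "(f s - c)\<^sup>2 = (f s)\<^sup>2 - 2 * c * f s + c\<^sup>2" for s
    by (simp add: power2_diff mult_ac)
  have "((\<lambda>s. (f s - c)\<^sup>2) has_integral Q - 2 * c * I + c\<^sup>2 * (b - a)) {a..b}"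
    unfolding expand Q_def I_def using \<open>a < b\<close>
    by (intro has_integral_add has_integral_diff has_integral_mult_right integrable_integral f f2)
      (auto intro: has_integral_const_real[THEN has_integral_eq_rhs])
  then have "0 \<le> Q - 2 * c * I + c\<^sup>2 * (b - a)"
    by (rule has_integral_nonneg) simp
  moreover have "c * (b - a) = I"
    using \<open>a < b\<close> by (simp add: c_def)
  then have "c\<^sup>2 * (b - a) = c * I"
    by (metis mult.assoc power2_eq_square)
  ultimately have "c * I \<le> Q"
    by linarith
  then have "c * (b - a) * I \<le> (b - a) * Q"
    using \<open>a < b\<close> by (simp add: mult.assoc mult_left_mono)
  then show ?thesis
    using \<open>c * (b - a) = I\<close> by (simp add: I_def Q_def power2_eq_square)
qed

lemma obs_gramian_upper_bound:
  assumes X: "fundamental_matrix A X" and k: "\<And>t. t \<ge> 0 \<Longrightarrow> norm (A t) \<le> k"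
    and C: "continuous_on {0..} C" and c: "\<And>t. t \<ge> 0 \<Longrightarrow> norm (C t) \<le> c"
    and "0 \<le> t0" "0 \<le> \<sigma>"
  shows "v \<bullet> (obs_gramian X C (t0 + \<sigma>) t0 *v v) \<le> \<sigma> * (c * exp (k * \<sigma>))\<^sup>2 * (v \<bullet> v)"
proof -
  have "k \<ge> 0" "c \<ge> 0"
    using k[of 0] c[of 0] norm_ge_zero[of "A 0"] norm_ge_zero[of "C 0"] by linarith+
  have "norm (C s *v (trans_mat X s t0 *v v)) \<le> c * exp (k * \<sigma>) * norm v"
    if "s \<in> {t0..t0 + \<sigma>}" for s
  proof -
    have "norm (C s *v (trans_mat X s t0 *v v)) \<le> norm (C s) * norm (trans_mat X s t0 *v v)"
      by (rule norm_matrix_vector_mult_le)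
    also have "\<dots> \<le> c * (exp (k * (s - t0)) * norm v)"
      using that \<open>0 \<le> t0\<close> \<open>c \<ge> 0\<close>
      by (intro mult_mono c norm_trans_mat_vector_le_exp[OF X k]) auto
    also have "\<dots> \<le> c * (exp (k * \<sigma>) * norm v)"
      using that \<open>k \<ge> 0\<close> \<open>c \<ge> 0\<close> by (intro mult_left_mono mult_right_mono) (auto intro: mult_left_mono)
    finally show ?thesis by (simp add: mult.assoc)
  qed
  then have "integral {t0..t0 + \<sigma>} (\<lambda>s. (norm (C s *v (trans_mat X s t0 *v v)))\<^sup>2)
      \<le> integral {t0..t0 + \<sigma>} (\<lambda>s. (c * exp (k * \<sigma>) * norm v)\<^sup>2)"
    by (intro integral_le integrable_continuous_atLeast[OF _ \<open>0 \<le> t0\<close>] continuous_intros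
        continuous_on_output[OF X C] power_mono) auto
  then show ?thesis
    using \<open>0 \<le> \<sigma>\<close>
    by (simp add: obs_gramian_quadratic_form[OF X C \<open>0 \<le> t0\<close>] power_mult_distrib power2_norm_eq_inner
        mult_ac)
qed

lemma norm_trans_mat_le_output_integral:
  assumes X: "fundamental_matrix A X" and Y: "fundamental_matrix (\<lambda>t. A t - L t ** C t) Y"
    and C: "continuous_on {0..} C" and "0 \<le> t0" "t0 \<le> t"
    and Y_bound: "\<And>s. t0 \<le> s \<Longrightarrow> s \<le> t \<Longrightarrow> norm (trans_mat Y t s) \<le> K1"
    and L_bound: "\<And>s. s \<ge> 0 \<Longrightarrow> norm (L s) \<le> l"
  shows "norm (trans_mat X t t0 *v v)
    \<le> K1 * norm v + K1 * l * integral {t0..t} (\<lambda>s. norm (C s *v (trans_mat X s t0 *v v)))"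
proof -
  let ?y = "\<lambda>s. C s *v (trans_mat X s t0 *v v)"
  have voc: "((\<lambda>s. trans_mat Y t s *v (L s *v ?y s)) has_integral
      trans_mat X t t0 *v v - trans_mat Y t t0 *v v) {t0..t}"
    using variation_of_constants[where B = "\<lambda>s. L s ** C s", OF X Y \<open>0 \<le> t0\<close> \<open>t0 \<le> t\<close>]
    by (simp add: matrix_vector_mul_assoc matrix_mul_assoc)
  have bound: "norm (trans_mat Y t s *v (L s *v ?y s)) \<le> K1 * l * norm (?y s)" if "s \<in> {t0..t}" for s
  proof -
    have "norm (trans_mat Y t s *v (L s *v ?y s)) \<le> norm (trans_mat Y t s) * (norm (L s) * norm (?y s))"
      by (meson norm_matrix_vector_mult_le order_trans mult_left_mono norm_ge_zero)
    also have "\<dots> \<le> K1 * (l * norm (?y s))"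
      using that \<open>0 \<le> t0\<close> Y_bound[of s] L_bound[of s]
      by (intro mult_mono) (auto intro: order_trans[OF norm_ge_zero])
    finally show ?thesis by (simp add: mult.assoc)
  qed
  have "(\<lambda>s. K1 * l * norm (?y s)) integrable_on {t0..t}"
    by (intro integrable_continuous_atLeast[OF _ \<open>0 \<le> t0\<close>] continuous_intros continuous_on_output[OF X C])
  from integral_norm_bound_integral[OF has_integral_integrable[OF voc] this bound]
  have "norm (trans_mat X t t0 *v v - trans_mat Y t t0 *v v)
      \<le> integral {t0..t} (\<lambda>s. K1 * l * norm (?y s))"
    by (simp add: integral_unique[OF voc])
  moreover have "norm (trans_mat Y t t0 *v v) \<le> K1 * norm v"
    using Y_bound[OF order_refl \<open>t0 \<le> t\<close>]
    by (meson norm_matrix_vector_mult_le order_trans mult_right_mono norm_ge_zero)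
  ultimately show ?thesis
    using norm_triangle_sub[of "trans_mat X t t0 *v v" "trans_mat Y t t0 *v v"] by simp
qed

lemma obs_gramian_lower_bound:
  assumes X: "fundamental_matrix A X" and Y: "fundamental_matrix (\<lambda>t. A t - L t ** C t) Y"
    and C: "continuous_on {0..} C" and "0 \<le> t0" "\<sigma> > 0"
    and Y_bound: "\<And>s. t0 \<le> s \<Longrightarrow> s \<le> t0 + \<sigma> \<Longrightarrow> norm (trans_mat Y (t0 + \<sigma>) s) \<le> K1"
    and L_bound: "\<And>s. s \<ge> 0 \<Longrightarrow> norm (L s) \<le> l" and "K1 * l > 0"
    and expanded: "(K1 + 2) * norm v \<le> norm (trans_mat X (t0 + \<sigma>) t0 *v v)"
  shows "4 / ((K1 * l)\<^sup>2 * \<sigma>) * (v \<bullet> v) \<le> v \<bullet> (obs_gramian X C (t0 + \<sigma>) t0 *v v)"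
proof -
  let ?y = "\<lambda>s. C s *v (trans_mat X s t0 *v v)"
  let ?I = "integral {t0..t0 + \<sigma>} (\<lambda>s. norm (?y s))"
  have integrable: "(\<lambda>s. norm (?y s)) integrable_on {t0..t0 + \<sigma>}"
      "(\<lambda>s. (norm (?y s))\<^sup>2) integrable_on {t0..t0 + \<sigma>}"
    by (intro integrable_continuous_atLeast[OF _ \<open>0 \<le> t0\<close>] continuous_intros
        continuous_on_output[OF X C])+
  have "(K1 + 2) * norm v \<le> K1 * norm v + K1 * l * ?I"
    using expanded norm_trans_mat_le_output_integral[OF X Y C \<open>0 \<le> t0\<close> _ Y_bound L_bound, of v]
      \<open>\<sigma> > 0\<close> by simp
  then have "(2 * norm v)\<^sup>2 \<le> (K1 * l * ?I)\<^sup>2"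
    by (intro power_mono) (simp_all add: algebra_simps)
  also have "\<dots> \<le> (K1 * l)\<^sup>2 * (\<sigma> * integral {t0..t0 + \<sigma>} (\<lambda>s. (norm (?y s))\<^sup>2))"
    using integral_square_le[OF integrable] \<open>\<sigma> > 0\<close>
    by (simp add: power_mult_distrib mult_left_mono)
  finally have "4 * (norm v)\<^sup>2 \<le> ((K1 * l)\<^sup>2 * \<sigma>) * integral {t0..t0 + \<sigma>} (\<lambda>s. (norm (?y s))\<^sup>2)"
    by (simp add: power_mult_distrib mult.assoc)
  moreover have "(K1 * l)\<^sup>2 * \<sigma> > 0"
    by (rule mult_pos_pos[OF zero_less_power[OF \<open>K1 * l > 0\<close>] \<open>\<sigma> > 0\<close>])
  ultimately show ?thesis
    by (simp add: obs_gramian_quadratic_form[OF X C \<open>0 \<le> t0\<close>] power2_norm_eq_inner[symmetric]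
        divide_le_eq mult.commute)
qed

lemma unif_exp_stable_trans_mat_bounded:
  assumes "unif_exp_stable A"
  obtains X K where "fundamental_matrix A X" "K \<ge> 1"
    "\<And>t0 t. 0 \<le> t0 \<Longrightarrow> t0 \<le> t \<Longrightarrow> norm (trans_mat X t t0) \<le> K"
proof -
  obtain X \<mu> K where "fundamental_matrix A X" "\<mu> > 0" "K \<ge> 1"
    and decay: "\<And>t0 t. 0 \<le> t0 \<Longrightarrow> t0 \<le> t \<Longrightarrow> norm (trans_mat X t t0) \<le> K * exp (- \<mu> * (t - t0))"
    using assms unfolding unif_exp_stable_def by blast
  moreover have "K * exp (- \<mu> * (t - t0)) \<le> K" if "t0 \<le> t" for t0 t
    using \<open>\<mu> > 0\<close> \<open>K \<ge> 1\<close> that by (simp add: mult_nonneg_nonneg)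
  ultimately show ?thesis
    using that by (meson order_trans)
qed

lemma trans_mat_expands_on_window:
  assumes X: "fundamental_matrix A X"
    and expanding: "\<And>t t0. 0 \<le> t \<Longrightarrow> t \<le> t0 \<Longrightarrow> norm (trans_mat X t t0) \<le> K * exp (\<alpha> * (t - t0))"
    and "K \<ge> 1" "\<alpha> > 0" "R \<ge> 1"
  obtains \<sigma> where "\<sigma> > 0" "\<And>t0 v. t0 \<ge> 0 \<Longrightarrow> R * norm v \<le> norm (trans_mat X (t0 + \<sigma>) t0 *v v)"
proof -
  define \<sigma> where "\<sigma> = ln (2 * K * R) / \<alpha>"
  have "2 * K * R \<ge> 2 * 1 * 1"
    using \<open>K \<ge> 1\<close> \<open>R \<ge> 1\<close> by (intro mult_mono) auto
  then have "\<sigma> > 0" and exp_\<sigma>: "exp (\<alpha> * \<sigma>) = 2 * K * R"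
    using \<open>\<alpha> > 0\<close> by (simp_all add: \<sigma>_def ln_gt_zero)
  have "R * norm v \<le> norm (trans_mat X (t0 + \<sigma>) t0 *v v)" if "t0 \<ge> 0" for t0 v
  proof -
    have "norm v = norm (trans_mat X t0 (t0 + \<sigma>) *v (trans_mat X (t0 + \<sigma>) t0 *v v))"
      using trans_mat_cancel_vector[OF X] that \<open>\<sigma> > 0\<close> by simp
    also have "\<dots> \<le> K * exp (- (\<alpha> * \<sigma>)) * norm (trans_mat X (t0 + \<sigma>) t0 *v v)"
      using expanding[of t0 "t0 + \<sigma>"] that \<open>\<sigma> > 0\<close>
      by (intro order_trans[OF norm_matrix_vector_mult_le] mult_right_mono) auto
    also have "K * exp (- (\<alpha> * \<sigma>)) = 1 / (2 * R)"
      using \<open>K \<ge> 1\<close> \<open>R \<ge> 1\<close> by (simp add: exp_minus exp_\<sigma> field_simps)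
    finally have "2 * R * norm v \<le> norm (trans_mat X (t0 + \<sigma>) t0 *v v)"
      using \<open>R \<ge> 1\<close> by (simp add: field_simps)
    moreover have "0 \<le> R * norm v"
      using \<open>R \<ge> 1\<close> by simp
    ultimately show ?thesis
      by linarith
  qed
  with \<open>\<sigma> > 0\<close> show ?thesis
    by (rule that)
qed

lemma unif_complete_obs_if_detectable:
  assumes X: "fundamental_matrix A X"
    and expanding: "\<And>t t0. 0 \<le> t \<Longrightarrow> t \<le> t0 \<Longrightarrow> norm (trans_mat X t t0) \<le> K * exp (\<alpha> * (t - t0))"
    and "K \<ge> 1" "\<alpha> > 0"
    and k: "\<And>t. t \<ge> 0 \<Longrightarrow> norm (A t) \<le> k"
    and C: "continuous_on {0..} C" and c: "\<And>t. t \<ge> 0 \<Longrightarrow> norm (C t) \<le> c"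
    and "unif_exp_detectable A C"
  shows "unif_complete_obs A C"
proof -
  obtain L l0 where L_bound0: "\<And>t. t \<ge> 0 \<Longrightarrow> norm (L t) \<le> l0"
    and "unif_exp_stable (\<lambda>t. A t - L t ** C t)"
    using \<open>unif_exp_detectable A C\<close> unfolding unif_exp_detectable_def uniformly_bounded_iff by blast
  from this(2) obtain Y K1 where Y: "fundamental_matrix (\<lambda>t. A t - L t ** C t) Y" and "K1 \<ge> 1"
    and Y_bound: "\<And>t0 t. 0 \<le> t0 \<Longrightarrow> t0 \<le> t \<Longrightarrow> norm (trans_mat Y t t0) \<le> K1"
    by (erule unif_exp_stable_trans_mat_bounded)
  define l where "l = max l0 1"
  have L_bound: "norm (L t) \<le> l" if "t \<ge> 0" for t
    using L_bound0[OF that] by (simp add: l_def)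
  have "K1 * l > 0"
    using \<open>K1 \<ge> 1\<close> by (simp add: l_def)
  obtain \<sigma> where "\<sigma> > 0"
    and expanded: "\<And>t0 v. t0 \<ge> 0 \<Longrightarrow> (K1 + 2) * norm v \<le> norm (trans_mat X (t0 + \<sigma>) t0 *v v)"
    using trans_mat_expands_on_window[OF X expanding \<open>K \<ge> 1\<close> \<open>\<alpha> > 0\<close>, of "K1 + 2"] \<open>K1 \<ge> 1\<close>
    by auto
  define \<beta>1 where "\<beta>1 = 4 / ((K1 * l)\<^sup>2 * \<sigma>)"
  define \<beta>2 where "\<beta>2 = \<sigma> * ((c + 1) * exp (k * \<sigma>))\<^sup>2"
  have "c \<ge> 0"
    using c[of 0] norm_ge_zero[of "C 0"] by linarith
  then have "\<beta>1 > 0" "\<beta>2 > 0"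
    using \<open>\<sigma> > 0\<close> \<open>K1 * l > 0\<close> by (auto simp: \<beta>1_def \<beta>2_def intro!: divide_pos_pos mult_pos_pos)
  moreover have "\<beta>1 * (v \<bullet> v) \<le> v \<bullet> (obs_gramian X C (t0 + \<sigma>) t0 *v v)" if "t0 \<ge> 0" for t0 v
    unfolding \<beta>1_def
    by (rule obs_gramian_lower_bound[OF X Y C that \<open>\<sigma> > 0\<close> Y_bound L_bound \<open>K1 * l > 0\<close> expanded[OF that]])
      (use that in auto)
  moreover have "v \<bullet> (obs_gramian X C (t0 + \<sigma>) t0 *v v) \<le> \<beta>2 * (v \<bullet> v)" if "t0 \<ge> 0" for t0 v
    unfolding \<beta>2_def
    by (rule obs_gramian_upper_bound[OF X k C _ that]) (use c \<open>\<sigma> > 0\<close> in \<open>force+\<close>)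
  ultimately show ?thesis
    unfolding unif_complete_obs_def using X \<open>\<sigma> > 0\<close> by blast
qed

section \<open>Observability implies detectability: the Gramian observer\<close>

lemma quadratic_form_matrix_inv_antimono:
  fixes P Q :: "real^'n^'n"
  assumes "invertible P" "invertible Q"
    and symmetric: "\<And>u w. u \<bullet> (P *v w) = w \<bullet> (P *v u)"
    and nonneg: "\<And>u. 0 \<le> u \<bullet> (P *v u)"
    and le: "\<And>u. u \<bullet> (P *v u) \<le> u \<bullet> (Q *v u)"
  shows "(matrix_inv Q *v c) \<bullet> c \<le> (matrix_inv P *v c) \<bullet> c"
proof -
  define u where "u = matrix_inv Q *v c"
  define u0 where "u0 = matrix_inv P *v c"
  have "Q *v u = c" "P *v u0 = c"
    using assms(1,2) by (simp_all add: u_def u0_def matrix_inv_cancel_vector)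
  have "0 \<le> (u - u0) \<bullet> (P *v (u - u0))"
    by (rule nonneg)
  also have "\<dots> = u \<bullet> (P *v u) - 2 * (u \<bullet> c) + u0 \<bullet> c"
    using symmetric[of u0 u] \<open>P *v u0 = c\<close>
    by (simp add: matrix_vector_mult_diff_distrib inner_diff_left inner_diff_right inner_commute)
  also have "u \<bullet> (P *v u) \<le> u \<bullet> c"
    using le[of u] \<open>Q *v u = c\<close> by simp
  finally show ?thesis
    by (simp add: u_def u0_def inner_commute)
qed

lemma exp_weighted_integral_le:
  fixes f :: "real \<Rightarrow> real"
  assumes "t \<ge> 0" "(\<lambda>s. exp (2 * s) * f s) integrable_on {0..t}"
    and "\<And>s. s \<in> {0..t} \<Longrightarrow> f s \<le> M" "M \<ge> 0"
  shows "exp (- 2 * t) * integral {0..t} (\<lambda>s. exp (2 * s) * f s) \<le> M / 2"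
proof -
  have "((\<lambda>s. exp (2 * s)) has_integral exp (2 * t) / 2 - exp (2 * 0) / 2) {0..t}"
    by (rule fundamental_theorem_of_calculus[OF assms(1)])
      (auto intro!: derivative_eq_intros simp flip: has_real_derivative_iff_has_vector_derivative)
  then have "((\<lambda>s. M * exp (2 * s)) has_integral M * ((exp (2 * t) - 1) / 2)) {0..t}"
    by (simp add: has_integral_mult_right diff_divide_distrib)
  then have "integral {0..t} (\<lambda>s. exp (2 * s) * f s) \<le> M * ((exp (2 * t) - 1) / 2)"
    using assms(2,3) by (intro has_integral_le[OF integrable_integral]) (auto simp: mult.commute)
  then have "exp (- 2 * t) * integral {0..t} (\<lambda>s. exp (2 * s) * f s)
      \<le> M * ((1 - exp (- 2 * t)) / 2)"
    by (auto dest: mult_left_mono[of _ _ "exp (- 2 * t)"] simp: algebra_simps diff_divide_distrib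
        simp flip: exp_add)
  also have "\<dots> \<le> M / 2"
    using mult_left_le[of "1 - exp (- 2 * t)" M] assms(4) by simp
  finally show ?thesis .
qed

locale observer_design =
  fixes A :: "real \<Rightarrow> real^'n^'n" and C :: "real \<Rightarrow> real^'n^'p" and X :: "real \<Rightarrow> real^'n^'n"
  assumes fundamental: "fundamental_matrix A X"
    and continuous_C: "continuous_on {0..} C"
begin

definition weighted_gramian_density :: "real \<Rightarrow> real^'n^'n" where
  "weighted_gramian_density s = exp (2 * s) *\<^sub>R (transpose (X s) ** transpose (C s) ** (C s ** X s))"

text \<open>The weight exp(2s) becomes the decay rate of the observer error; the term X(0)^T X(0)
  makes the Gramian invertible for all t \<ge> 0.\<close>

definition weighted_gramian :: "real \<Rightarrow> real^'n^'n" where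
  "weighted_gramian t = transpose (X 0) ** X 0 + integral {0..t} weighted_gramian_density"

lemma continuous_on_weighted_gramian_density: "continuous_on {0..} weighted_gramian_density"
  unfolding weighted_gramian_density_def
  by (intro continuous_intros bounded_bilinear.continuous_on[OF bounded_bilinear_matrix_matrix_mult]
      bounded_linear.continuous_on[OF bounded_linear_transpose]
      continuous_on_fundamental_matrix[OF fundamental] continuous_C)

lemma weighted_gramian_has_vector_derivative:
  "t \<ge> 0 \<Longrightarrow> (weighted_gramian has_vector_derivative weighted_gramian_density t) (at t within {0..})"
  unfolding weighted_gramian_def
  using has_vector_derivative_add[OF has_vector_derivative_const
      integral_has_vector_derivative_atLeast[OF continuous_on_weighted_gramian_density]]
  by simp

lemma weighted_gramian_quadratic_form:
  assumes "t \<ge> 0"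
  shows "u \<bullet> (weighted_gramian t *v w) = (X 0 *v u) \<bullet> (X 0 *v w)
    + integral {0..t} (\<lambda>s. exp (2 * s) * ((C s *v (X s *v u)) \<bullet> (C s *v (X s *v w))))"
  unfolding weighted_gramian_def
  by (simp add: integral_quadratic_form integrable_continuous_atLeast[OF continuous_on_weighted_gramian_density]
      matrix_vector_mult_add_rdistrib inner_add_right weighted_gramian_density_def
      matrix_vector_mult_scaleR_left inner_transpose_matrix_vector
      flip: matrix_vector_mul_assoc del: transpose_matrix_vector)

lemma weighted_gramian_symmetric: "t \<ge> 0 \<Longrightarrow> u \<bullet> (weighted_gramian t *v w) = w \<bullet> (weighted_gramian t *v u)"
  by (simp add: weighted_gramian_quadratic_form inner_commute)

lemma integrable_weighted_output:
  "0 \<le> a \<Longrightarrow> (\<lambda>s. exp (2 * s) * (norm (C s *v (X s *v u)))\<^sup>2) integrable_on {a..b}"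
  by (intro integrable_continuous_atLeast[of 0] continuous_intros continuous_C
      bounded_bilinear.continuous_on[OF bounded_bilinear_matrix_vector_mult]
      continuous_on_fundamental_matrix[OF fundamental])

lemma weighted_gramian_mono:
  assumes "0 \<le> t0" "t0 \<le> t"
  shows "u \<bullet> (weighted_gramian t0 *v u) \<le> u \<bullet> (weighted_gramian t *v u)"
  using integral_subset_le[of "{0..t0}" "{0..t}", OF _ integrable_weighted_output integrable_weighted_output]
    assms
  by (simp add: weighted_gramian_quadratic_form power2_norm_eq_inner)

lemma weighted_gramian_ge: "t \<ge> 0 \<Longrightarrow> (norm (X 0 *v u))\<^sup>2 \<le> u \<bullet> (weighted_gramian t *v u)"
  using weighted_gramian_mono[of 0 t u]
  by (simp add: weighted_gramian_quadratic_form power2_norm_eq_inner)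

lemma invertible_weighted_gramian:
  assumes "t \<ge> 0"
  shows "invertible (weighted_gramian t)"
proof (rule invertible_if_kernel_trivial)
  fix v assume "weighted_gramian t *v v = 0"
  then have "X 0 *v v = 0"
    using weighted_gramian_ge[OF assms, of v] by simp
  then show "v = 0"
    using matrix_inv_cancel_vector(2)[OF fundamental_matrix_invertible[OF fundamental], of 0 v] by simp
qed

definition gain :: "real \<Rightarrow> real^'p^'n" where
  "gain t = exp (2 * t) *\<^sub>R (X t ** matrix_inv (weighted_gramian t) ** transpose (X t) ** transpose (C t))"

definition error_matrix :: "real \<Rightarrow> real^'n^'n" where
  "error_matrix t = X t ** matrix_inv (weighted_gramian t)"

lemma matrix_inv_weighted_gramian_has_vector_derivative:
  "t \<ge> 0 \<Longrightarrow> ((\<lambda>s. matrix_inv (weighted_gramian s)) has_vector_derivative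
      - (matrix_inv (weighted_gramian t) ** weighted_gramian_density t ** matrix_inv (weighted_gramian t)))
    (at t within {0..})"
  by (intro has_vector_derivative_matrix_inv weighted_gramian_has_vector_derivative
      invertible_weighted_gramian)

lemma continuous_on_gain: "continuous_on {0..} gain"
proof -
  have "continuous_on {0..} (\<lambda>s. matrix_inv (weighted_gramian s))"
    unfolding continuous_on_eq_continuous_within
    by (auto intro: has_vector_derivative_continuous matrix_inv_weighted_gramian_has_vector_derivative)
  then show ?thesis
    unfolding gain_def
    by (intro continuous_intros bounded_bilinear.continuous_on[OF bounded_bilinear_matrix_matrix_mult]
        bounded_linear.continuous_on[OF bounded_linear_transpose]
        continuous_on_fundamental_matrix[OF fundamental] continuous_C)
qed

lemma fundamental_matrix_error: "fundamental_matrix (\<lambda>t. A t - gain t ** C t) error_matrix"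
  unfolding fundamental_matrix_def
proof (intro allI impI conjI)
  fix t :: real assume "t \<ge> 0"
  let ?Wi = "matrix_inv (weighted_gramian t)"
  have "(error_matrix has_vector_derivative
      X t ** - (?Wi ** weighted_gramian_density t ** ?Wi) + A t ** X t ** ?Wi) (at t within {0..})"
    unfolding error_matrix_def
    using bounded_bilinear.has_vector_derivative[OF bounded_bilinear_matrix_matrix_mult
        fundamental_matrix_has_vector_derivative[OF fundamental \<open>t \<ge> 0\<close>]
        matrix_inv_weighted_gramian_has_vector_derivative[OF \<open>t \<ge> 0\<close>]]
    by simp
  moreover have "X t ** - (?Wi ** weighted_gramian_density t ** ?Wi) + A t ** X t ** ?Wi
      = (A t - gain t ** C t) ** error_matrix t"
    unfolding error_matrix_def gain_def weighted_gramian_density_def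
    by (simp add: matrix_mult_minus_right matrix_mult_diff_left matrix_mult_scaleR_left
        matrix_mult_scaleR_right matrix_mul_assoc)
  ultimately show "(error_matrix has_vector_derivative (A t - gain t ** C t) ** error_matrix t) (at t within {0..})"
    by simp
  show "invertible (error_matrix t)"
    unfolding error_matrix_def
    by (intro invertible_mult fundamental_matrix_invertible[OF fundamental] invertible_matrix_inv
        invertible_weighted_gramian \<open>t \<ge> 0\<close>)
qed

definition lyapunov :: "real \<Rightarrow> real^'n \<Rightarrow> real" where
  "lyapunov t v = exp (- 2 * t) * ((matrix_inv (X t) *v v) \<bullet> (weighted_gramian t *v (matrix_inv (X t) *v v)))"

lemma lyapunov_eq:
  assumes "t \<ge> 0"
  shows "lyapunov t v = exp (- 2 * t) * ((norm (trans_mat X 0 t *v v))\<^sup>2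
    + integral {0..t} (\<lambda>s. exp (2 * s) * (norm (C s *v (trans_mat X s t *v v)))\<^sup>2))"
proof -
  have "X s *v (matrix_inv (X t) *v v) = trans_mat X s t *v v" for s
    by (simp add: trans_mat_def matrix_vector_mul_assoc)
  then show ?thesis
    using weighted_gramian_quadratic_form[OF assms, of "matrix_inv (X t) *v v" "matrix_inv (X t) *v v"]
    by (simp add: lyapunov_def power2_norm_eq_inner)
qed

lemma lyapunov_error_decay:
  assumes "0 \<le> t0" "t0 \<le> t"
  shows "lyapunov t (trans_mat error_matrix t t0 *v e) \<le> exp (- 2 * (t - t0)) * lyapunov t0 e"
proof -
  \<comment> \<open>the error is X(t) W(t)^-1 c for a constant vector c, where W is the weighted
    Gramian; W(t)^-1 decreases in t\<close>
  have "t \<ge> 0" using assms by linarith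
  note invertible = fundamental_matrix_invertible[OF fundamental] invertible_weighted_gramian
  define c where "c = weighted_gramian t0 *v (matrix_inv (X t0) *v e)"
  have "trans_mat error_matrix t t0 *v e = X t *v (matrix_inv (weighted_gramian t) *v c)"
    using invertible[OF \<open>0 \<le> t0\<close>]
    by (simp add: trans_mat_def error_matrix_def c_def matrix_inv_mult invertible_matrix_inv
        matrix_inv_matrix_inv matrix_vector_mul_assoc matrix_mul_assoc)
  then have "lyapunov t (trans_mat error_matrix t t0 *v e)
      = exp (- 2 * t) * ((matrix_inv (weighted_gramian t) *v c) \<bullet> c)"
    using invertible[OF \<open>t \<ge> 0\<close>] by (simp add: lyapunov_def matrix_inv_cancel_vector)
  also have "\<dots> \<le> exp (- 2 * t) * ((matrix_inv (weighted_gramian t0) *v c) \<bullet> c)"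
    using weighted_gramian_symmetric weighted_gramian_ge[THEN order_trans[OF zero_le_power2]]
      weighted_gramian_mono assms
    by (intro mult_left_mono quadratic_form_matrix_inv_antimono invertible) auto
  also have "\<dots> = exp (- 2 * (t - t0)) * lyapunov t0 e"
    using invertible[OF \<open>0 \<le> t0\<close>]
    by (simp add: lyapunov_def c_def matrix_inv_cancel_vector inner_commute algebra_simps flip: exp_add)
  finally show ?thesis .
qed

end

locale bounded_observer_design = observer_design A C X
  for A :: "real \<Rightarrow> real^'n^'n" and C :: "real \<Rightarrow> real^'n^'p" and X +
  fixes K k c \<beta> \<sigma> :: real
  assumes backward_bounded: "\<And>s t. 0 \<le> s \<Longrightarrow> s \<le> t \<Longrightarrow> norm (trans_mat X s t) \<le> K"
    and A_bounded: "\<And>t. t \<ge> 0 \<Longrightarrow> norm (A t) \<le> k"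
    and C_bounded: "\<And>t. t \<ge> 0 \<Longrightarrow> norm (C t) \<le> c"
    and positive: "\<beta> > 0" "\<sigma> > 0"
    and observable: "\<And>t0 w. t0 \<ge> 0 \<Longrightarrow> \<beta> * (w \<bullet> w) \<le> w \<bullet> (obs_gramian X C (t0 + \<sigma>) t0 *v w)"
begin

lemma nonneg_bounds: "K \<ge> 0" "k \<ge> 0" "c \<ge> 0"
  using backward_bounded[of 0 0] A_bounded[of 0] C_bounded[of 0]
    norm_ge_zero[of "trans_mat X 0 0"] norm_ge_zero[of "A 0"] norm_ge_zero[of "C 0"]
  by linarith+

lemma lyapunov_le:
  assumes "t \<ge> 0"
  shows "lyapunov t v \<le> (K\<^sup>2 + (c * K)\<^sup>2 / 2) * (norm v)\<^sup>2"
proof -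
  let ?y = "\<lambda>s. C s *v (trans_mat X s t *v v)"
  have "norm (?y s) \<le> c * K * norm v" if "s \<in> {0..t}" for s
    using that C_bounded[of s] backward_bounded[of s t] nonneg_bounds
    by (simp add: mult.assoc, intro order_trans[OF norm_matrix_vector_mult_le] mult_mono
        order_trans[OF norm_matrix_vector_mult_le] mult_right_mono) auto
  then have "exp (- 2 * t) * integral {0..t} (\<lambda>s. exp (2 * s) * (norm (?y s))\<^sup>2) \<le> (c * K * norm v)\<^sup>2 / 2"
    using assms
    by (intro exp_weighted_integral_le integrable_continuous_atLeast[OF _ order_refl] continuous_intros
        continuous_on_output[OF fundamental continuous_C] power_mono) auto
  moreover have "(norm (trans_mat X 0 t *v v))\<^sup>2 \<le> (K * norm v)\<^sup>2"
    using assms backward_bounded[of 0 t]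
    by (intro power_mono order_trans[OF norm_matrix_vector_mult_le] mult_right_mono) auto
  then have "exp (- 2 * t) * (norm (trans_mat X 0 t *v v))\<^sup>2 \<le> (K * norm v)\<^sup>2"
    using assms mult_right_mono[of "exp (- 2 * t)" 1 "(norm (trans_mat X 0 t *v v))\<^sup>2"] by simp
  ultimately show ?thesis
    by (simp add: lyapunov_eq[OF assms] distrib_left algebra_simps power_mult_distrib)
qed

lemma norm_sq_le_trans_mat:
  assumes "0 \<le> s" "s \<le> t" "t \<le> s + \<sigma>"
  shows "exp (- 2 * k * \<sigma>) * (norm v)\<^sup>2 \<le> (norm (trans_mat X s t *v v))\<^sup>2"
proof -
  have "norm v \<le> exp (k * (t - s)) * norm (trans_mat X s t *v v)"
    by (rule norm_le_exp_norm_trans_mat[OF fundamental A_bounded assms(1,2)])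
  also have "\<dots> \<le> exp (k * \<sigma>) * norm (trans_mat X s t *v v)"
    using assms nonneg_bounds by (intro mult_right_mono) (auto intro: mult_left_mono)
  finally have "(norm v)\<^sup>2 \<le> exp (2 * k * \<sigma>) * (norm (trans_mat X s t *v v))\<^sup>2"
    by (auto dest: power_mono[of _ _ 2] simp: power_mult_distrib exp_double[symmetric] mult.assoc)
  then have "exp (- 2 * k * \<sigma>) * (norm v)\<^sup>2
      \<le> exp (- 2 * k * \<sigma>) * exp (2 * k * \<sigma>) * (norm (trans_mat X s t *v v))\<^sup>2"
    by (simp add: mult.assoc)
  then show ?thesis
    by (simp flip: exp_add)
qed

lemma lyapunov_ge_initial:
  assumes "t \<ge> 0"
  shows "exp (- 2 * t) * (norm (trans_mat X 0 t *v v))\<^sup>2 \<le> lyapunov t v"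
proof -
  have "0 \<le> integral {0..t} (\<lambda>s. exp (2 * s) * (norm (C s *v (trans_mat X s t *v v)))\<^sup>2)"
    by (intro integral_nonneg integrable_continuous_atLeast[OF _ order_refl] continuous_intros
        continuous_on_output[OF fundamental continuous_C]) auto
  then show ?thesis
    by (simp add: lyapunov_eq[OF assms] distrib_left)
qed

lemma lyapunov_ge_window:
  assumes "0 \<le> t1" "t = t1 + \<sigma>"
  shows "exp (- 2 * \<sigma>) * \<beta> * (norm (trans_mat X t1 t *v v))\<^sup>2 \<le> lyapunov t v"
proof -
  let ?f = "\<lambda>s. exp (2 * s) * (norm (C s *v (trans_mat X s t *v v)))\<^sup>2"
  have integrable: "?f integrable_on {a..b}" if "0 \<le> a" for a b
    using that by (intro integrable_continuous_atLeast[of 0] continuous_intros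
        continuous_on_output[OF fundamental continuous_C])
  define w where "w = trans_mat X t1 t *v v"
  have w: "trans_mat X s t1 *v w = trans_mat X s t *v v" for s
    using trans_mat_trans[OF fundamental \<open>0 \<le> t1\<close>, of s t]
    by (simp add: w_def matrix_vector_mul_assoc)
  have "exp (2 * t1) * (\<beta> * (norm w)\<^sup>2) \<le> exp (2 * t1) * (w \<bullet> (obs_gramian X C (t1 + \<sigma>) t1 *v w))"
    using observable[OF \<open>0 \<le> t1\<close>, of w] by (simp add: power2_norm_eq_inner)
  also have "\<dots> = integral {t1..t} (\<lambda>s. exp (2 * t1) * (norm (C s *v (trans_mat X s t *v v)))\<^sup>2)"
    unfolding obs_gramian_quadratic_form[OF fundamental continuous_C \<open>0 \<le> t1\<close>] w
      \<open>t = t1 + \<sigma>\<close>[symmetric]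
    by simp
  also have "\<dots> \<le> integral {t1..t} ?f"
    using \<open>0 \<le> t1\<close>
    by (intro integral_le integrable integrable_continuous_atLeast[OF _ \<open>0 \<le> t1\<close>] continuous_intros
        continuous_on_output[OF fundamental continuous_C] mult_right_mono) auto
  also have "\<dots> \<le> integral {0..t} ?f"
    using assms positive by (intro integral_subset_le integrable) auto
  finally have gramian_part: "exp (2 * t1) * (\<beta> * (norm w)\<^sup>2) \<le> integral {0..t} ?f" .
  have "exp (- 2 * t) * exp (2 * t1) = exp (- 2 * \<sigma>)"
    unfolding \<open>t = t1 + \<sigma>\<close> by (simp add: algebra_simps flip: exp_add)
  then have "exp (- 2 * \<sigma>) * \<beta> * (norm w)\<^sup>2 = exp (- 2 * t) * (exp (2 * t1) * (\<beta> * (norm w)\<^sup>2))"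
    by (metis mult.assoc)
  also have "\<dots> \<le> exp (- 2 * t) * integral {0..t} ?f"
    using gramian_part by (rule mult_left_mono) simp
  also have "\<dots> \<le> lyapunov t v"
    using assms positive by (simp add: lyapunov_eq distrib_left)
  finally show ?thesis
    by (simp add: w_def)
qed

lemma lyapunov_ge:
  assumes "t \<ge> 0"
  shows "exp (- 2 * (k + 1) * \<sigma>) * min 1 \<beta> * (norm v)\<^sup>2 \<le> lyapunov t v"
proof -
  have exp_split: "exp (- 2 * (k + 1) * \<sigma>) = exp (- 2 * \<sigma>) * exp (- 2 * k * \<sigma>)"
    by (simp add: algebra_simps flip: exp_add)
  show ?thesis
  proof (cases "t \<le> \<sigma>")
    case True
    \<comment> \<open>the regularising term of the Gramian suffices\<close>
    have "exp (- 2 * (k + 1) * \<sigma>) * min 1 \<beta> * (norm v)\<^sup>2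
        = exp (- 2 * \<sigma>) * min 1 \<beta> * (exp (- 2 * k * \<sigma>) * (norm v)\<^sup>2)"
      unfolding exp_split by (simp add: mult_ac)
    also have "\<dots> \<le> exp (- 2 * t) * (exp (- 2 * k * \<sigma>) * (norm v)\<^sup>2)"
      using True by (intro mult_right_mono order_trans[OF mult_left_le]) auto
    also have "\<dots> \<le> exp (- 2 * t) * (norm (trans_mat X 0 t *v v))\<^sup>2"
      using norm_sq_le_trans_mat[of 0 t v] True assms by simp
    also have "\<dots> \<le> lyapunov t v"
      by (rule lyapunov_ge_initial[OF assms])
    finally show ?thesis .
  next
    case False
    \<comment> \<open>the Gramian over the last window of length sigma dominates\<close>
    then have "0 \<le> t - \<sigma>" "t = (t - \<sigma>) + \<sigma>" by auto
    have "exp (- 2 * (k + 1) * \<sigma>) * min 1 \<beta> * (norm v)\<^sup>2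
        = exp (- 2 * \<sigma>) * min 1 \<beta> * (exp (- 2 * k * \<sigma>) * (norm v)\<^sup>2)"
      unfolding exp_split by (simp add: mult_ac)
    also have "\<dots> \<le> exp (- 2 * \<sigma>) * \<beta> * (exp (- 2 * k * \<sigma>) * (norm v)\<^sup>2)"
      by (intro mult_right_mono mult_left_mono) auto
    also have "\<dots> \<le> exp (- 2 * \<sigma>) * \<beta> * (norm (trans_mat X (t - \<sigma>) t *v v))\<^sup>2"
      using norm_sq_le_trans_mat[of "t - \<sigma>" t v] positive False by (intro mult_left_mono) auto
    also have "\<dots> \<le> lyapunov t v"
      by (rule lyapunov_ge_window) fact+
    finally show ?thesis .
  qed
qed

lemma lyapunov_bounds:
  obtains a b where "a > 0"
    "\<And>t v. t \<ge> 0 \<Longrightarrow> a * (norm v)\<^sup>2 \<le> lyapunov t v"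
    "\<And>t v. t \<ge> 0 \<Longrightarrow> lyapunov t v \<le> b * (norm v)\<^sup>2"
  using lyapunov_ge lyapunov_le positive
  by (metis exp_gt_zero min_less_iff_conj mult_pos_pos zero_less_one)

lemma uniformly_bounded_gain: "uniformly_bounded gain"
proof -
  obtain a where "a > 0" and lower: "\<And>t v. t \<ge> 0 \<Longrightarrow> a * (norm v)\<^sup>2 \<le> lyapunov t v"
    using lyapunov_bounds by metis
  have "norm (gain t *v z) \<le> c / a * norm z" if "t \<ge> 0" for t z
  proof -
    let ?Wi = "matrix_inv (weighted_gramian t)"
    define u where "u = transpose (C t) *v z"
    define y where "y = ?Wi *v (transpose (X t) *v u)"
    define w where "w = gain t *v z"
    have w: "w = exp (2 * t) *\<^sub>R (X t *v y)"
      by (simp add: w_def gain_def y_def u_def matrix_vector_mult_scaleR_left matrix_vector_mul_assoc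
          matrix_mul_assoc del: transpose_matrix_vector)
    \<comment> \<open>at w = gain t *v z the Lyapunov function is the pairing of w with C(t)^T z\<close>
    have "lyapunov t w = exp (- 2 * t) * (exp (2 * t) * exp (2 * t)) * (y \<bullet> (transpose (X t) *v u))"
      using fundamental_matrix_invertible[OF fundamental that] invertible_weighted_gramian[OF that]
      by (simp add: lyapunov_def w matrix_inv_cancel_vector matrix_vector_mult_scaleR y_def
          del: transpose_matrix_vector)
    also have "\<dots> = w \<bullet> u"
      by (simp add: w inner_transpose_matrix_vector mult.assoc[symmetric] del: transpose_matrix_vector
          flip: exp_add)
    finally have "a * (norm w)\<^sup>2 \<le> norm w * norm u"
      using lower[OF that, of w] Cauchy_Schwarz_ineq2[of w u] by simp
    then have "a * norm w \<le> norm u"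
      using \<open>a > 0\<close> by (cases "w = 0") (auto simp: power2_eq_square)
    also have "norm u \<le> c * norm z"
      unfolding u_def using C_bounded[OF that]
      by (intro order_trans[OF norm_matrix_vector_mult_le] mult_right_mono) (auto simp: norm_transpose)
    finally show ?thesis
      using \<open>a > 0\<close> by (simp add: w_def field_simps)
  qed
  then show ?thesis
    unfolding uniformly_bounded_iff by (blast intro: norm_matrix_le_card_mult)
qed

lemma unif_exp_stable_error: "unif_exp_stable (\<lambda>t. A t - gain t ** C t)"
proof -
  obtain a b where "a > 0"
    and lower: "\<And>t v. t \<ge> 0 \<Longrightarrow> a * (norm v)\<^sup>2 \<le> lyapunov t v"
    and upper: "\<And>t v. t \<ge> 0 \<Longrightarrow> lyapunov t v \<le> b * (norm v)\<^sup>2"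
    using lyapunov_bounds by metis
  have "a \<le> b"
    using lower[of 0 "axis undefined 1"] upper[of 0 "axis undefined 1"] by (simp add: norm_axis_1)
  have decay: "norm (trans_mat error_matrix t t0 *v e) \<le> sqrt (b / a) * exp (- (t - t0)) * norm e"
    if "0 \<le> t0" "t0 \<le> t" for t0 t e
  proof -
    have "a * (norm (trans_mat error_matrix t t0 *v e))\<^sup>2 \<le> exp (- 2 * (t - t0)) * (b * (norm e)\<^sup>2)"
      using lower[of t] lyapunov_error_decay[OF that, of e] upper[OF \<open>0 \<le> t0\<close>, of e] that
      by (meson exp_ge_zero mult_left_mono order_trans)
    then have "(norm (trans_mat error_matrix t t0 *v e))\<^sup>2 \<le> b / a * (exp (- 2 * (t - t0)) * (norm e)\<^sup>2)"
      using \<open>a > 0\<close> by (simp add: field_simps)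
    also have "\<dots> = (sqrt (b / a) * exp (- (t - t0)) * norm e)\<^sup>2"
      using \<open>a > 0\<close> \<open>a \<le> b\<close> by (simp add: power_mult_distrib flip: exp_double)
    finally show ?thesis
      by (rule power2_le_imp_le) (use \<open>a > 0\<close> \<open>a \<le> b\<close> in simp)
  qed
  show ?thesis
    unfolding unif_exp_stable_def
  proof (intro exI conjI allI impI)
    show "fundamental_matrix (\<lambda>t. A t - gain t ** C t) error_matrix"
      by (rule fundamental_matrix_error)
    have "1 * 1 \<le> real CARD('n) * (sqrt (b / a) + 1)"
      using \<open>a > 0\<close> \<open>a \<le> b\<close> by (intro mult_mono) (auto simp: Suc_le_eq)
    then show "real CARD('n) * (sqrt (b / a) + 1) \<ge> 1"
      by simp
    fix t0 t :: real assume "0 \<le> t0" "t0 \<le> t"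
    have "norm (trans_mat error_matrix t t0) \<le> real CARD('n) * (sqrt (b / a) * exp (- (t - t0)))"
      using decay[OF \<open>0 \<le> t0\<close> \<open>t0 \<le> t\<close>] by (intro norm_matrix_le_card_mult) simp
    also have "\<dots> \<le> real CARD('n) * (sqrt (b / a) + 1) * exp (- 1 * (t - t0))"
      by (simp add: mult.assoc mult_left_mono mult_right_mono)
    finally show "norm (trans_mat error_matrix t t0) \<le> real CARD('n) * (sqrt (b / a) + 1) * exp (- 1 * (t - t0))" .
  qed simp
qed

lemma unif_exp_detectable: "unif_exp_detectable A C"
  unfolding unif_exp_detectable_def
  using continuous_on_gain uniformly_bounded_gain unif_exp_stable_error by blast

end

lemma detectable_if_unif_complete_obs:
  assumes X: "fundamental_matrix A X"
    and backward_bounded: "\<And>s t. 0 \<le> s \<Longrightarrow> s \<le> t \<Longrightarrow> norm (trans_mat X s t) \<le> K"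
    and k: "\<And>t. t \<ge> 0 \<Longrightarrow> norm (A t) \<le> k"
    and C: "continuous_on {0..} C" and c: "\<And>t. t \<ge> 0 \<Longrightarrow> norm (C t) \<le> c"
    and "unif_complete_obs A C"
  shows "unif_exp_detectable A C"
proof -
  obtain Z \<beta> \<sigma> where Z: "fundamental_matrix A Z" "\<beta> > 0" "\<sigma> > 0"
    "\<And>t0 w. t0 \<ge> 0 \<Longrightarrow> \<beta> * (w \<bullet> w) \<le> w \<bullet> (obs_gramian Z C (t0 + \<sigma>) t0 *v w)"
    using \<open>unif_complete_obs A C\<close> unfolding unif_complete_obs_def by blast
  have "bounded_observer_design A C Z K k c \<beta> \<sigma>"
    using Z C k c backward_bounded trans_mat_unique[OF X Z(1)]
    by unfold_locales auto
  then show ?thesis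
    by (rule bounded_observer_design.unif_exp_detectable)
qed

theorem proposition1:
  fixes A :: "real \<Rightarrow> real^'n^'n" and C :: "real \<Rightarrow> real^'n^'p"
  assumes "continuous_on {0..} A" and "continuous_on {0..} C"
    and "uniformly_bounded A" and "uniformly_bounded C"
    and "exp_dichotomy A (mat 0)"
  shows "unif_exp_detectable A C \<longleftrightarrow> unif_complete_obs A C"
proof -
  obtain k where k: "\<And>t. t \<ge> 0 \<Longrightarrow> norm (A t) \<le> k"
    using assms(3) unfolding uniformly_bounded_iff by blast
  obtain c where c: "\<And>t. t \<ge> 0 \<Longrightarrow> norm (C t) \<le> c"
    using assms(4) unfolding uniformly_bounded_iff by blast
  obtain X K \<alpha> where X: "fundamental_matrix A X" and "K \<ge> 1" "\<alpha> > 0"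
    and expanding: "\<And>t t0. 0 \<le> t \<Longrightarrow> t \<le> t0 \<Longrightarrow> norm (trans_mat X t t0) \<le> K * exp (\<alpha> * (t - t0))"
    and backward_bounded: "\<And>t t0. 0 \<le> t \<Longrightarrow> t \<le> t0 \<Longrightarrow> norm (trans_mat X t t0) \<le> K"
    using exp_dichotomy_zero_backward_decay[OF assms(5)] by blast
  show ?thesis
    using unif_complete_obs_if_detectable[OF X expanding \<open>K \<ge> 1\<close> \<open>\<alpha> > 0\<close> k assms(2) c]
      detectable_if_unif_complete_obs[OF X backward_bounded k assms(2) c]
    by auto
qed

end
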